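(* Let $q$ be a prime such that the multiplicative order of $2$ in $(\mathbb{Z}/q\mathbb{Z})^\times$ is congruent to $2 \pmod 4$. Let $n \geq 1$ be an integer, $v = 3q^n$, and $k$ an odd positive integer. Then there are no integers $a_1, \ldots, a_k$ with $1 \leq a_j < v$ such that $\prod_{j=1}^k a_j = \prod_{j=1}^k (v - a_j)$. *)

theory Defs
  imports "HOL-Number_Theory.Number_Theory"
begin

end

theory Submission
  imports Defs
begin

text \<open>
  Write each \<open>a\<^sub>j\<close> and \<open>v - a\<^sub>j\<close> as a power of \<open>q\<close> times a cofactor prime to \<open>q\<close>.
  As the order of 2 modulo \<open>q\<close> is twice an odd number \<open>m\<close>, we have \<open>2\<^sup>m \<equiv> -1 (mod q)\<close>,
  and then every pair of cofactors \<open>a', b'\<close> satisfies \<open>b'\<^sup>m \<equiv> -a'\<^sup>m (mod q)\<close>: either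
  \<open>b' \<equiv> -a'\<close>, or \<open>q\<^sup>n\<close> divides \<open>a\<^sub>j\<close> and the cofactors are 1 and 2.
  Comparing \<open>q\<close>-free parts, the product equation gives \<open>\<Prod>a' = \<Prod>b' =: P\<close>, and since \<open>k\<close>
  is odd, \<open>P\<^sup>m \<equiv> -P\<^sup>m (mod q)\<close>; as \<open>q\<close> is odd this forces \<open>q\<close> to divide \<open>P\<close>, a contradiction.
\<close>

lemma ord_half_power_cong_minus_one:
  fixes p a :: nat
  assumes "prime p" and "ord p a \<noteq> 0" and "even (ord p a)"
  shows "[int a ^ (ord p a div 2) = -1] (mod int p)"
proof -
  define m where "m = ord p a div 2"
  have ord_eq: "ord p a = 2 * m" using assms(3) by (simp add: m_def)
  have "[a ^ ord p a = 1] (mod p)" by (rule ord)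
  hence "int p dvd int a ^ ord p a - 1"
    by (metis cong_iff_dvd_diff cong_int_iff of_nat_1 of_nat_power)
  also have "int a ^ ord p a - 1 = (int a ^ m - 1) * (int a ^ m + 1)"
    by (simp add: ord_eq power_mult power2_eq_square algebra_simps)
  finally have dvd_product: "int p dvd (int a ^ m - 1) * (int a ^ m + 1)" .
  have "\<not> [a ^ m = 1] (mod p)" using assms(2) by (intro ord_minimal) (auto simp: ord_eq)
  hence "\<not> int p dvd int a ^ m - 1"
    by (metis cong_iff_dvd_diff cong_int_iff of_nat_1 of_nat_power)
  with dvd_product have "int p dvd int a ^ m + 1"
    using assms(1) by (simp add: prime_dvd_mult_iff)
  thus ?thesis by (simp add: m_def cong_iff_dvd_diff)
qed

lemma ord_twice_odd_power_cong_minus_one: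
  fixes p a :: nat
  assumes "prime p" and "ord p a mod 4 = 2"
  obtains m where "odd m" and "[int a ^ m = -1] (mod int p)"
proof
  show "odd (ord p a div 2)" using assms(2) by presburger
  show "[int a ^ (ord p a div 2) = -1] (mod int p)"
  proof (rule ord_half_power_cong_minus_one)
    show "ord p a \<noteq> 0" and "even (ord p a)" using assms(2) by presburger+
  qed (rule assms(1))
qed

lemma prime_power_mult_cancel:
  fixes p :: "'a :: factorial_semiring_multiplicative"
  assumes "p ^ i * x = p ^ j * y" and "\<not> p dvd x" and "\<not> p dvd y" and "p \<noteq> 0"
  shows "x = y"
proof -
  have "i = j" using multiplicity_decomposeI[of _ p i x] multiplicity_decomposeI[of _ p j y] assms by metis
  with assms(1,4) show ?thesis by simp
qed

lemma prod_prime_power_cofactors_eq: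
  fixes p :: "'a :: factorial_semiring_multiplicative"
  assumes "prime p" and "finite J"
    and "\<And>j. j \<in> J \<Longrightarrow> x j = p ^ U j * A j \<and> \<not> p dvd A j"
    and "\<And>j. j \<in> J \<Longrightarrow> y j = p ^ W j * B j \<and> \<not> p dvd B j"
    and "prod x J = prod y J"
  shows "prod A J = prod B J"
proof (rule prime_power_mult_cancel)
  have "prod x J = prod (\<lambda>j. p ^ U j * A j) J" using assms(3) by (intro prod.cong) auto
  also have "\<dots> = p ^ sum U J * prod A J" by (simp add: power_sum prod.distrib)
  finally have "prod x J = p ^ sum U J * prod A J" .
  moreover have "prod y J = prod (\<lambda>j. p ^ W j * B j) J" using assms(4) by (intro prod.cong) auto
  ultimately show "p ^ sum U J * prod A J = p ^ sum W J * prod B J"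
    using assms(5) by (simp add: power_sum prod.distrib)
  show "\<not> p dvd prod A J" "\<not> p dvd prod B J"
    using assms by (auto simp: prime_dvd_prod_iff)
  show "p \<noteq> 0" using assms(1) by auto
qed

lemma odd_power_cong_neg_prod_dvd:
  fixes p :: int
  assumes "prime p" and "p \<noteq> 2" and "odd m" and "odd (card J)"
    and "\<And>j. j \<in> J \<Longrightarrow> [B j ^ m = - (A j ^ m)] (mod p)"
    and "prod A J = prod B J"
  shows "p dvd prod A J"
proof -
  have "[prod B J ^ m = prod (\<lambda>j. - (A j ^ m)) J] (mod p)"
    unfolding prod_power_distrib by (rule cong_prod) (rule assms(5))
  also have "prod (\<lambda>j. - (A j ^ m)) J = - (prod A J ^ m)"
    using assms(4) by (simp add: prod_uminus prod_power_distrib)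
  finally have "p dvd 2 * prod A J ^ m"
    using assms(6) by (simp add: cong_iff_dvd_diff)
  moreover have "\<not> p dvd 2" using assms(1,2) primes_dvd_imp_eq[of p 2] by auto
  ultimately show ?thesis using assms(1) by (auto simp: prime_dvd_mult_iff dest: prime_dvd_power)
qed

lemma complement_cofactors_cong:
  fixes q n m :: nat and a :: int
  assumes "prime q" and "q \<noteq> 2" and "odd m" and two_pow: "[2 ^ m = -1] (mod int q)"
    and "1 \<le> a" and "a < 3 * int q ^ n"
  shows "\<exists>u a' w b'. (a = int q ^ u * a' \<and> \<not> int q dvd a') \<and>
           (3 * int q ^ n - a = int q ^ w * b' \<and> \<not> int q dvd b') \<and>
           [b' ^ m = - (a' ^ m)] (mod int q)"
proof -
  have "q \<ge> 3" using assms(1,2) prime_ge_2_nat[of q] by linarith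
  hence q_gt_1: "int q > 1" by simp
  obtain u a' where a: "a = int q ^ u * a'" and not_dvd_a': "\<not> int q dvd a'"
  proof (rule multiplicity_decompose')
    show "a \<noteq> 0" "\<not> is_unit (int q)" using assms(5) q_gt_1 by auto
  qed
  have "0 < int q ^ u * a'" using a assms(5) by simp
  hence "a' > 0" by (simp add: zero_less_mult_iff)
  have "u \<le> n"
  proof (rule ccontr)
    assume "\<not> u \<le> n"
    hence "int q ^ Suc n \<le> int q ^ u" using q_gt_1 by (intro power_increasing) auto
    also have "\<dots> \<le> a" using a \<open>a' > 0\<close> q_gt_1 by (simp add: mult_le_cancel_left1)
    finally have "int q * int q ^ n \<le> a" by simp
    moreover have "3 * int q ^ n \<le> int q * int q ^ n" using \<open>q \<ge> 3\<close> by (intro mult_right_mono) auto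
    ultimately show False using assms(6) by simp
  qed
  show ?thesis
  proof (cases "u < n")
    case True
    define b' where "b' = 3 * int q ^ (n - u) - a'"
    have q_dvd: "int q dvd 3 * int q ^ (n - u)" using True by simp
    have "3 * int q ^ n - a = int q ^ u * b'"
      using True by (simp add: a b'_def algebra_simps power_add[symmetric])
    moreover have "\<not> int q dvd b'"
      using not_dvd_a' q_dvd by (simp add: b'_def dvd_diff_right_iff)
    moreover have "[b' = - a'] (mod int q)"
      using q_dvd by (simp add: b'_def cong_iff_dvd_diff)
    hence "[b' ^ m = - (a' ^ m)] (mod int q)"
      using \<open>odd m\<close> by (metis cong_pow power_minus_odd)
    ultimately show ?thesis using a not_dvd_a' by blast
  next
    case False
    with \<open>u \<le> n\<close> have "u = n" by simp
    hence "a' < 3" using a assms(6) q_gt_1 by simp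
    hence "a' = 1 \<or> a' = 2" using \<open>a' > 0\<close> by auto
    have "\<not> int q dvd 2" using assms(1,2) primes_dvd_imp_eq[of "int q" 2] by auto
    have "3 * int q ^ n - a = int q ^ n * (3 - a')" using a \<open>u = n\<close> by (simp add: algebra_simps)
    moreover have "\<not> int q dvd 3 - a'" and "[(3 - a') ^ m = - (a' ^ m)] (mod int q)"
      using \<open>a' = 1 \<or> a' = 2\<close> \<open>\<not> int q dvd 2\<close> not_dvd_a' two_pow
      by (auto simp: cong_iff_dvd_diff add.commute)
    ultimately show ?thesis using a not_dvd_a' by blast
  qed
qed

theorem corollary4p12:
  fixes q n k :: nat
  assumes "prime q"
    and "ord q 2 mod 4 = 2"
    and "n \<ge> 1"
    and "odd k"
  shows "\<not> (\<exists>a :: nat \<Rightarrow> int.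
            (\<forall>j\<in>{1..k}. 1 \<le> a j \<and> a j < 3 * int q ^ n) \<and>
            (\<Prod>j=1..k. a j) = (\<Prod>j=1..k. 3 * int q ^ n - a j))"
proof
  assume "\<exists>a :: nat \<Rightarrow> int.
            (\<forall>j\<in>{1..k}. 1 \<le> a j \<and> a j < 3 * int q ^ n) \<and>
            (\<Prod>j=1..k. a j) = (\<Prod>j=1..k. 3 * int q ^ n - a j)"
  then obtain a :: "nat \<Rightarrow> int" where bounds: "\<forall>j\<in>{1..k}. 1 \<le> a j \<and> a j < 3 * int q ^ n"
    and prod_eq: "(\<Prod>j=1..k. a j) = (\<Prod>j=1..k. 3 * int q ^ n - a j)" by blast
  have "q \<noteq> 2" using assms(2) by (auto simp: ord_eq_0)
  obtain m where "odd m" and two_pow: "[2 ^ m = -1] (mod int q)"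
    using ord_twice_odd_power_cong_minus_one[OF assms(1,2)] by auto
  have "\<forall>j\<in>{1..k}. \<exists>u a' w b'. (a j = int q ^ u * a' \<and> \<not> int q dvd a') \<and>
      (3 * int q ^ n - a j = int q ^ w * b' \<and> \<not> int q dvd b') \<and>
      [b' ^ m = - (a' ^ m)] (mod int q)"
    using complement_cofactors_cong[OF assms(1) \<open>q \<noteq> 2\<close> \<open>odd m\<close> two_pow] bounds by blast
  then obtain U A W B where cofactors: "\<forall>j\<in>{1..k}. (a j = int q ^ U j * A j \<and> \<not> int q dvd A j) \<and>
      (3 * int q ^ n - a j = int q ^ W j * B j \<and> \<not> int q dvd B j) \<and>
      [B j ^ m = - (A j ^ m)] (mod int q)"
    by metis
  have "prime (int q)" using assms(1) by simp
  have "prod A {1..k} = prod B {1..k}"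
    by (rule prod_prime_power_cofactors_eq[where U = U and W = W, OF \<open>prime (int q)\<close> _ _ _ prod_eq])
       (simp, (use cofactors in blast)+)
  hence "int q dvd prod A {1..k}"
    using odd_power_cong_neg_prod_dvd[OF \<open>prime (int q)\<close> _ \<open>odd m\<close>, of "{1..k}" B A]
      cofactors assms(4) \<open>q \<noteq> 2\<close> by simp
  thus False using cofactors \<open>prime (int q)\<close> by (auto simp: prime_dvd_prod_iff)
qed
end
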